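(* In the standard LLP setup, suppose $K=\overline{K}$ and there is no starting error in $L(G,\gamma^N_{cons})$ (i.e. $f^N_{cons}(\epsilon)\neq\emptyset$). If $N_u(K)$ is defined and $N\ge N_u(K)+2$, then $L(G,\gamma^N_{cons})=\overline{K^\uparrow}$.
   Context: Standard LLP setup. $\Sigma=\Sigma_c\,\dot\cup\,\Sigma_{uc}$ is a finite alphabet partitioned into controllable and uncontrollable events. The plant $G$ has generated language $L(G)$ and marked language $L_m(G)$ with $L(G)=\overline{L_m(G)}$ ($\overline{M}$ = set of prefixes of strings in $M$). The legal language $K\subseteq L_m(G)$ satisfies $K=\overline{K}\cap L_m(G)$. For a prefix-closed $L$, $M$ is controllable w.r.t. $L$ if $\overline{M}\Sigma_{uc}\cap L\subseteq\overline{M}$; $K^\uparrow$ is the supremal sublanguage of $K$ controllable w.r.t. $L(G)$. For a language $L$ and $s\in\Sigma^*$: $L/s=\{t: st\in L\}$; $L|_N=\{t\in L:|t|\le N\}$; $\Sigma_{L(G)}(s)=\{\sigma\in\Sigma: s\sigma\in L(G)\}$. $M^{\uparrow/s|_N}$ is the supremal sublanguage of $M$ controllable w.r.t. $L(G)/s|_N$. Conservative attitude: $f^N_{cons}(s)=[K/s|_{N-1}]^{\uparrow/s|_N}$; control policy $\gamma^N_{cons}(s)=(\overline{f^N_{cons}(s)}\cap\Sigma)\cup(\Sigma_{uc}\cap\Sigma_{L(G)}(s))$. Closed-loop language $L(G,\gamma)$: $\epsilon\in L(G,\gamma)$, and $s\sigma\in L(G,\gamma)$ iff $s\in L(G,\gamma)$,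 $s\sigma\in L(G)$, $\sigma\in\gamma(s)$. For a language $L$, $N_u(L)=\max\{|t|: t\in\Sigma_{uc}^*,\ \exists u,v\in\Sigma^*,\ utv\in L\}$ if this maximum exists; otherwise undefined. *)

theory Defs
  imports Main
begin

text \<open>The alphabet is an explicit finite set Sig, partitioned into the uncontrollable
  events Sig_uc and the controllable events Sig - Sig_uc.\<close>

definition pre :: "'a list set \<Rightarrow> 'a list set" where
  "pre M = {s. \<exists>t. s @ t \<in> M}"

definition controllable :: "'a set \<Rightarrow> 'a list set \<Rightarrow> 'a list set \<Rightarrow> bool" where
  "controllable Sig_uc M L \<longleftrightarrow>
     (\<forall>s \<in> pre M. \<forall>\<sigma> \<in> Sig_uc. s @ [\<sigma>] \<in> L \<longrightarrow> s @ [\<sigma>] \<in> pre M)"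

definition supcon :: "'a set \<Rightarrow> 'a list set \<Rightarrow> 'a list set \<Rightarrow> 'a list set" where
  "supcon Sig_uc M L = \<Union>{M'. M' \<subseteq> M \<and> controllable Sig_uc M' L}"

definition quot :: "'a list set \<Rightarrow> 'a list \<Rightarrow> 'a list set" where
  "quot L s = {t. s @ t \<in> L}"

definition trunc :: "'a list set \<Rightarrow> nat \<Rightarrow> 'a list set" where
  "trunc L N = {t \<in> L. length t \<le> N}"

text \<open>Conservative attitude: f_cons^N(s) = [K/s|_{N-1}]^{up / s |_N}, the supremal sublanguage
  controllable w.r.t. L(G)/s|_N.\<close>
definition f_cons :: "'a set \<Rightarrow> 'a list set \<Rightarrow> 'a list set \<Rightarrow> nat \<Rightarrow> 'a list \<Rightarrow> 'a list set" where
  "f_cons Sig_uc LG K N s = supcon Sig_uc (trunc (quot K s) (N - 1)) (trunc (quot LG s) N)"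

definition gamma_cons :: "'a set \<Rightarrow> 'a set \<Rightarrow> 'a list set \<Rightarrow> 'a list set \<Rightarrow> nat \<Rightarrow> 'a list \<Rightarrow> 'a set" where
  "gamma_cons Sig Sig_uc LG K N s =
     {\<sigma> \<in> Sig. [\<sigma>] \<in> pre (f_cons Sig_uc LG K N s)} \<union> {\<sigma> \<in> Sig_uc. s @ [\<sigma>] \<in> LG}"

inductive_set closed_loop :: "'a list set \<Rightarrow> ('a list \<Rightarrow> 'a set) \<Rightarrow> 'a list set"
  for LG :: "'a list set" and \<gamma> :: "'a list \<Rightarrow> 'a set" where
  Nil: "[] \<in> closed_loop LG \<gamma>"
| snoc: "s \<in> closed_loop LG \<gamma> \<Longrightarrow> s @ [\<sigma>] \<in> LG \<Longrightarrow> \<sigma> \<in> \<gamma> s \<Longrightarrow> s @ [\<sigma>] \<in> closed_loop LG \<gamma>"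

text \<open>N_u(L): lengths of uncontrollable substrings; N_u(L) is defined and equals n iff n is
  the maximum of this set.\<close>
definition Nu_set :: "'a set \<Rightarrow> 'a list set \<Rightarrow> nat set" where
  "Nu_set Sig_uc L = {length t | t. t \<in> lists Sig_uc \<and> (\<exists>u v. u @ t @ v \<in> L)}"

definition is_Nu :: "'a set \<Rightarrow> 'a list set \<Rightarrow> nat \<Rightarrow> bool" where
  "is_Nu Sig_uc L n \<longleftrightarrow> n \<in> Nu_set Sig_uc L \<and> (\<forall>m \<in> Nu_set Sig_uc L. m \<le> n)"

end

theory Submission
  imports Defs
begin

text \<open>
  Inclusion of the closed loop in the prefixes of K\<up>: along a closed-loop string s, the lookahead
  solution f(s), appended to s, can be added to K\<up> without losing controllability (its strings
  are shorter than the lookahead window, so truncation hides no uncontrollable continuation);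
  hence every step enabled by f(s) stays inside the prefixes of K\<up>.

  Reverse inclusion: if x\<sigma> is a prefix of K\<up>, the continuations t of x within the prefixes of
  K\<up> that are uncontrollable after their first event form a controllable language. Their
  uncontrollable tails are substrings of K, so they have length at most N_u(K) + 1 \<le> N - 1,
  and they therefore lie below f(x); in particular \<sigma> is enabled at x.
\<close>

lemma preI: "s @ t \<in> M \<Longrightarrow> s \<in> pre M"
  unfolding pre_def by blast

lemma subset_pre: "M \<subseteq> pre M"
  unfolding pre_def by (auto intro: exI[of _ "[]"])

lemma pre_appendD: "s @ t \<in> pre M \<Longrightarrow> s \<in> pre M"
  unfolding pre_def by auto

lemma pre_mono: "A \<subseteq> B \<Longrightarrow> pre A \<subseteq> pre B"
  unfolding pre_def by blast

lemma pre_Un: "pre (A \<union> B) = pre A \<union> pre B"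
  unfolding pre_def by blast

lemma pre_image_append:
  assumes "x \<in> pre ((@) s ` F)"
  shows "(\<exists>us \<in> pre F. x = s @ us) \<or> (\<exists>v. v \<noteq> [] \<and> x @ v = s)"
proof -
  from assms obtain r t where t: "t \<in> F" "x @ r = s @ t"
    unfolding pre_def by blast
  then obtain us where "(x = s @ us \<and> us @ r = t) \<or> (x @ us = s \<and> r = us @ t)"
    by (auto simp: append_eq_append_conv2)
  then show ?thesis
  proof
    assume "x = s @ us \<and> us @ r = t"
    then show ?thesis using t(1) preI[of us r F] by blast
  next
    assume split: "x @ us = s \<and> r = us @ t"
    show ?thesis
    proof (cases "us = []")
      case True
      then have "x = s @ []" using split by simp
      moreover have "[] \<in> pre F" using t(1) preI[of "[]" t F] by simp
      ultimately show ?thesis by blast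
    next
      case False
      with split show ?thesis by blast
    qed
  qed
qed

lemma controllable_antimono:
  "controllable U M L \<Longrightarrow> L' \<subseteq> L \<Longrightarrow> controllable U M L'"
  unfolding controllable_def by blast

lemma supcon_subset: "supcon U M L \<subseteq> M"
  unfolding supcon_def by blast

lemma supcon_greatest: "M' \<subseteq> M \<Longrightarrow> controllable U M' L \<Longrightarrow> M' \<subseteq> supcon U M L"
  unfolding supcon_def by blast

lemma controllable_supcon: "controllable U (supcon U M L) L"
  unfolding controllable_def
proof (intro ballI impI)
  fix s \<sigma> assume s: "s \<in> pre (supcon U M L)" and "\<sigma> \<in> U" and "s @ [\<sigma>] \<in> L"
  from s obtain M' where M': "M' \<subseteq> M" "controllable U M' L" "s \<in> pre M'"
    unfolding supcon_def pre_def by blast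
  then have "s @ [\<sigma>] \<in> pre M'"
    using \<open>\<sigma> \<in> U\<close> \<open>s @ [\<sigma>] \<in> L\<close> unfolding controllable_def by blast
  moreover have "M' \<subseteq> supcon U M L"
    using M'(1,2) by (rule supcon_greatest)
  ultimately show "s @ [\<sigma>] \<in> pre (supcon U M L)"
    using pre_mono by blast
qed

lemma controllable_trunc_imp_controllable:
  assumes "controllable U F (trunc L N)" and "\<forall>t \<in> F. length t < N"
  shows "controllable U F L"
  unfolding controllable_def
proof (intro ballI impI)
  fix s u assume s: "s \<in> pre F" and "u \<in> U" and "s @ [u] \<in> L"
  from s obtain r where "s @ r \<in> F" unfolding pre_def by blast
  with assms(2) have "s @ [u] \<in> trunc L N"
    using \<open>s @ [u] \<in> L\<close> unfolding trunc_def by fastforce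
  with assms(1) s \<open>u \<in> U\<close> show "s @ [u] \<in> pre F"
    unfolding controllable_def by blast
qed

lemma controllable_Un_image_append:
  assumes C: "controllable U C L"
    and F: "controllable U F (quot L s)"
    and s: "s = [] \<or> s \<in> pre C"
  shows "controllable U (C \<union> (@) s ` F) L"
  unfolding controllable_def
proof (intro ballI impI)
  fix x u assume x: "x \<in> pre (C \<union> (@) s ` F)" and u: "u \<in> U" and xu: "x @ [u] \<in> L"
  have "x @ [u] \<in> pre C \<or> x @ [u] \<in> pre ((@) s ` F)"
  proof (cases "x \<in> pre C")
    case True
    with C u xu show ?thesis unfolding controllable_def by blast
  next
    case False
    with x have "x \<in> pre ((@) s ` F)" by (simp add: pre_Un)
    then consider us where "us \<in> pre F" "x = s @ us" | v where "v \<noteq> []" "x @ v = s"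
      using pre_image_append by blast
    then show ?thesis
    proof cases
      case 1
      with F u xu have "us @ [u] \<in> pre F"
        unfolding controllable_def quot_def by simp
      then obtain r where "us @ [u] @ r \<in> F" unfolding pre_def by auto
      with \<open>x = s @ us\<close> show ?thesis unfolding pre_def by force
    next
      case 2
      with s \<open>x \<notin> pre C\<close> show ?thesis using pre_appendD by blast
    qed
  qed
  then show "x @ [u] \<in> pre (C \<union> (@) s ` F)" by (simp add: pre_Un)
qed

lemma controllable_uncontrollable_tails:
  assumes "controllable U C L"
  shows "controllable U {t. x @ t \<in> pre C \<and> drop 1 t \<in> lists U} (quot L x)"
  unfolding controllable_def
proof (intro ballI impI)
  let ?M = "{t. x @ t \<in> pre C \<and> drop 1 t \<in> lists U}"
  fix y u assume y: "y \<in> pre ?M" and u: "u \<in> U" and "y @ [u] \<in> quot L x"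
  from y obtain r where r: "x @ y @ r \<in> pre C" "drop 1 (y @ r) \<in> lists U"
    unfolding pre_def by auto
  have "x @ y \<in> pre C"
    using r(1) pre_appendD[of "x @ y" r] by simp
  moreover have "(x @ y) @ [u] \<in> L"
    using \<open>y @ [u] \<in> quot L x\<close> unfolding quot_def by simp
  ultimately have "(x @ y) @ [u] \<in> pre C"
    using assms u unfolding controllable_def by blast
  moreover have "drop 1 (y @ [u]) \<in> lists U"
    using r(2) u by (cases y) simp_all
  ultimately have "y @ [u] \<in> ?M" by simp
  then show "y @ [u] \<in> pre ?M"
    using subset_pre[of ?M] by blast
qed

lemma is_Nu_length_le:
  "is_Nu U K n \<Longrightarrow> t \<in> lists U \<Longrightarrow> u @ t @ v \<in> K \<Longrightarrow> length t \<le> n"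
  unfolding is_Nu_def Nu_set_def by blast

lemma f_cons_subset: "f_cons U L K N s \<subseteq> trunc (quot K s) (N - 1)"
  unfolding f_cons_def by (rule supcon_subset)

lemma controllable_f_cons: "controllable U (f_cons U L K N s) (trunc (quot L s) N)"
  unfolding f_cons_def by (rule controllable_supcon)

lemma f_cons_subset_supconI:
  assumes "M \<subseteq> trunc (quot K s) (N - 1)" and "controllable U M (trunc (quot L s) N)"
  shows "M \<subseteq> f_cons U L K N s"
  unfolding f_cons_def using assms by (rule supcon_greatest)

lemma pre_f_cons_in_pre_supcon:
  assumes "N \<ge> 1"
    and s: "s = [] \<or> s \<in> pre (supcon U K L)"
    and t: "t \<in> pre (f_cons U L K N s)"
  shows "s @ t \<in> pre (supcon U K L)"
proof -
  let ?C = "supcon U K L" and ?F = "f_cons U L K N s"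
  have "\<forall>t \<in> ?F. length t < N"
    using f_cons_subset[of U L K N s] \<open>N \<ge> 1\<close> unfolding trunc_def by fastforce
  then have "controllable U ?F (quot L s)"
    by (rule controllable_trunc_imp_controllable[OF controllable_f_cons])
  then have "controllable U (?C \<union> (@) s ` ?F) L"
    by (rule controllable_Un_image_append[OF controllable_supcon _ s])
  moreover have "?C \<union> (@) s ` ?F \<subseteq> K"
    using f_cons_subset[of U L K N s] supcon_subset[of U K L]
    unfolding trunc_def quot_def by auto
  ultimately have "?C \<union> (@) s ` ?F \<subseteq> ?C"
    by (intro supcon_greatest)
  moreover from t obtain r where "t @ r \<in> ?F" unfolding pre_def by blast
  ultimately have "s @ t @ r \<in> ?C" by blast
  then show ?thesis using preI[of "s @ t" r] by simp
qed

lemma closed_loop_subset_pre_supcon: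
  assumes "N \<ge> 1" and "f_cons U L K N [] \<noteq> {}"
  shows "closed_loop L (gamma_cons Sig U L K N) \<subseteq> pre (supcon U K L)"
proof
  fix x assume "x \<in> closed_loop L (gamma_cons Sig U L K N)"
  then show "x \<in> pre (supcon U K L)"
  proof (induction rule: closed_loop.induct)
    case Nil
    from assms(2) obtain t where "[] @ t \<in> f_cons U L K N []" by auto
    then have "[] \<in> pre (f_cons U L K N [])" by (rule preI)
    from pre_f_cons_in_pre_supcon[OF assms(1) _ this] show ?case by simp
  next
    case (snoc s \<sigma>)
    show ?case
    proof (cases "\<sigma> \<in> U")
      case True
      with snoc.IH snoc.hyps(2) show ?thesis
        using controllable_supcon[of U K L] unfolding controllable_def by blast
    next
      case False
      with snoc.hyps(3) have "[\<sigma>] \<in> pre (f_cons U L K N s)"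
        unfolding gamma_cons_def by auto
      with snoc.IH show ?thesis
        using pre_f_cons_in_pre_supcon[OF assms(1), of s] by blast
    qed
  qed
qed

lemma in_gamma_cons_if_pre_supcon:
  assumes "K = pre K" and "K \<subseteq> L" and "L \<subseteq> lists Sig"
    and "is_Nu U K n" and "N \<ge> n + 2"
    and x\<sigma>: "x @ [\<sigma>] \<in> pre (supcon U K L)"
  shows "\<sigma> \<in> gamma_cons Sig U L K N x"
proof -
  let ?C = "supcon U K L"
  let ?M = "{t. x @ t \<in> pre ?C \<and> drop 1 t \<in> lists U}"
  have preC: "pre ?C \<subseteq> K"
    using pre_mono[OF supcon_subset[of U K L]] assms(1) by simp
  have "?M \<subseteq> trunc (quot K x) (N - 1)"
  proof
    fix t assume t: "t \<in> ?M"
    then have "x @ t \<in> K" using preC by blast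
    then have "(x @ take 1 t) @ drop 1 t @ [] \<in> K" by simp
    moreover have "drop 1 t \<in> lists U" using t by simp
    ultimately have "length (drop 1 t) \<le> n"
      using is_Nu_length_le[OF assms(4)] by blast
    with \<open>x @ t \<in> K\<close> \<open>N \<ge> n + 2\<close> show "t \<in> trunc (quot K x) (N - 1)"
      unfolding trunc_def quot_def by simp
  qed
  moreover have "controllable U ?M (trunc (quot L x) N)"
    using controllable_uncontrollable_tails[OF controllable_supcon]
    by (rule controllable_antimono) (auto simp: trunc_def)
  ultimately have "?M \<subseteq> f_cons U L K N x"
    by (rule f_cons_subset_supconI)
  moreover have "[\<sigma>] \<in> ?M" using x\<sigma> by simp
  ultimately have "[\<sigma>] \<in> pre (f_cons U L K N x)"
    using subset_pre[of "f_cons U L K N x"] by blast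
  moreover have "x @ [\<sigma>] \<in> lists Sig"
    using x\<sigma> preC assms(2,3) by blast
  then have "\<sigma> \<in> Sig" by simp
  ultimately show ?thesis
    unfolding gamma_cons_def by simp
qed

lemma pre_supcon_subset_closed_loop:
  assumes "K = pre K" and "K \<subseteq> L" and "L \<subseteq> lists Sig"
    and "is_Nu U K n" and "N \<ge> n + 2"
  shows "pre (supcon U K L) \<subseteq> closed_loop L (gamma_cons Sig U L K N)"
proof
  fix x assume "x \<in> pre (supcon U K L)"
  then show "x \<in> closed_loop L (gamma_cons Sig U L K N)"
  proof (induction x rule: rev_induct)
    case Nil
    show ?case by (rule closed_loop.Nil)
  next
    case (snoc \<sigma> x)
    have "x @ [\<sigma>] \<in> L"
      using snoc.prems pre_mono[OF supcon_subset[of U K L]] assms(1,2) by auto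
    moreover have "\<sigma> \<in> gamma_cons Sig U L K N x"
      using in_gamma_cons_if_pre_supcon[OF assms snoc.prems] .
    moreover have "x \<in> pre (supcon U K L)"
      using snoc.prems by (rule pre_appendD)
    ultimately show ?case
      using closed_loop.snoc[OF snoc.IH] by blast
  qed
qed

theorem theorem10:
  fixes Sig Sig_uc :: "'a set" and Lm K :: "'a list set" and N n :: nat
  assumes "finite Sig"
    and "Sig_uc \<subseteq> Sig"
    and "Lm \<subseteq> lists Sig"
    and "K \<subseteq> Lm"
    and "K = pre K \<inter> Lm"
    and "K = pre K"
    and "f_cons Sig_uc (pre Lm) K N [] \<noteq> {}"
    and "is_Nu Sig_uc K n"
    and "N \<ge> n + 2"
  shows "closed_loop (pre Lm) (gamma_cons Sig Sig_uc (pre Lm) K N)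
           = pre (supcon Sig_uc K (pre Lm))"
proof
  show "closed_loop (pre Lm) (gamma_cons Sig Sig_uc (pre Lm) K N)
          \<subseteq> pre (supcon Sig_uc K (pre Lm))"
    by (rule closed_loop_subset_pre_supcon) (use assms(7,9) in simp_all)
  have "K \<subseteq> pre Lm" using assms(4) subset_pre[of Lm] by blast
  moreover have "pre Lm \<subseteq> lists Sig" using assms(3) unfolding pre_def by auto
  ultimately show "pre (supcon Sig_uc K (pre Lm))
          \<subseteq> closed_loop (pre Lm) (gamma_cons Sig Sig_uc (pre Lm) K N)"
    by (rule pre_supcon_subset_closed_loop[OF assms(6) _ _ assms(8,9)])
qed

end
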